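(* Let $p \geqslant 3$ be a prime and $d \geqslant 1$ with $p^d \geqslant 7$, and let $V$ be a $d$-dimensional vector space over $\mathbb{F}_p$ with basis $\mathbf{b}_1,\ldots,\mathbf{b}_d$. Let $G = \mathrm{Sym}(V)$, let $\mu$ be a primitive element of $\mathbb{F}_p$, and for each $j$ let $g_j \in \mathrm{GL}(V)$ send $\mathbf{b}_j$ to $\mu\mathbf{b}_j$ and fix $\mathbf{b}_l$ for $l \neq j$; let $T = \langle g_1,\ldots,g_d\rangle$ be the group of diagonal matrices with respect to this basis. Let $i \in \{1,\ldots,d\}$ and let $a$ be a positive divisor of $p-1$ with $(p,a) \neq (5,2)$. Then there exists $x \in G$ such that \[ T \cap T^x = \langle g_1,\ldots,g_{i-1}, g_i^{a}, g_{i+1},\ldots,g_d\rangle. \]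
   Context: $\mathrm{GL}(V)$ is regarded as a subgroup of $\mathrm{Sym}(V)$. *)

theory Defs
  imports "HOL-Algebra.Algebra" "HOL-Number_Theory.Number_Theory"
begin

text \<open>The d-dimensional vector space F_p^d, vectors as functions nat => nat with
  coordinates in {0..<p} on indices 0..<d and 0 elsewhere. The basis vector b_(j+1)
  of the paper is the standard basis vector at index j.\<close>
definition Vsp :: "nat \<Rightarrow> nat \<Rightarrow> (nat \<Rightarrow> nat) set" where
  "Vsp p d = {v. (\<forall>j<d. v j < p) \<and> (\<forall>j\<ge>d. v j = 0)}"

definition SymV :: "nat \<Rightarrow> nat \<Rightarrow> ((nat \<Rightarrow> nat) \<Rightarrow> (nat \<Rightarrow> nat)) monoid" where
  "SymV p d = BijGroup (Vsp p d)"

definition gdiag :: "nat \<Rightarrow> nat \<Rightarrow> nat \<Rightarrow> nat \<Rightarrow> (nat \<Rightarrow> nat) \<Rightarrow> (nat \<Rightarrow> nat)" where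
  "gdiag p d mu j = (\<lambda>v \<in> Vsp p d. v(j := (mu * v j) mod p))"

definition conjg :: "('a, 'b) monoid_scheme \<Rightarrow> 'a set \<Rightarrow> 'a \<Rightarrow> 'a set" where
  "conjg G H x = (\<lambda>h. inv\<^bsub>G\<^esub> x \<otimes>\<^bsub>G\<^esub> h \<otimes>\<^bsub>G\<^esub> x) ` H"

end

theory Submission
  imports Defs
begin

(* Every element of T is a diagonal map v \<mapsto> (mu^(e j) * v j)_j, and x is taken to act on the
   i-th coordinate alone, by a permutation s of F_p.  Then x commutes with the diagonal map D_e
   when s commutes with multiplication by mu^(e i), and x D_e x^-1 is diagonal only if s conjugates
   multiplication by mu^(e i) into a scalar multiplication.  So it suffices to find s commuting
   with multiplication by mu^a that conjugates no other scalar multiplication into a scalar one.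
   For a = p - 1 the transposition (0 1) does.  Otherwise let s multiply the subgroup generated by
   mu^a by mu^a and fix everything else: on exponents s is u \<mapsto> u + a if a divides u, and a
   computation modulo p - 1 shows that this map cannot be intertwined with a translation by E
   unless a divides E, except when p - 1 = 4 and a = 2. *)

lemma finite_Vsp: "finite (Vsp p d)"
proof -
  have "Vsp p d \<subseteq> (\<lambda>f j. if j < d then f j else 0) ` PiE {..<d} (\<lambda>_. {..<p})"
  proof
    fix v assume v: "v \<in> Vsp p d"
    then have "v = (\<lambda>j. if j < d then restrict v {..<d} j else 0)"
      by (auto simp: Vsp_def)
    moreover have "restrict v {..<d} \<in> PiE {..<d} (\<lambda>_. {..<p})"
      using v by (auto simp: Vsp_def)
    ultimately show "v \<in> (\<lambda>f j. if j < d then f j else 0) ` PiE {..<d} (\<lambda>_. {..<p})"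
      by blast
  qed
  then show ?thesis
    by (rule finite_subset) (simp add: finite_PiE)
qed

lemma BijGroup_mult_eq:
  "f \<in> carrier (BijGroup S) \<Longrightarrow> g \<in> carrier (BijGroup S) \<Longrightarrow> g \<otimes>\<^bsub>BijGroup S\<^esub> f = (\<lambda>v \<in> S. g (f v))"
  by (simp add: BijGroup_def compose_def)

lemma carrier_BijGroup_of_inj_on:
  assumes "finite S" "f ` S \<subseteq> S" "inj_on f S" "f \<in> extensional S"
  shows "f \<in> carrier (BijGroup S)"
  using endo_inj_surj[OF assms(1-3)] assms(3,4) by (simp add: BijGroup_def Bij_def bij_betw_def)

lemma (in group) conjg_mem_iff:
  assumes "x \<in> carrier G" "t \<in> carrier G" "H \<subseteq> carrier G"
  shows "t \<in> conjg G H x \<longleftrightarrow> (\<exists>h \<in> H. x \<otimes> t = h \<otimes> x)"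
proof -
  have "t = inv x \<otimes> h \<otimes> x \<longleftrightarrow> x \<otimes> t = h \<otimes> x" if "h \<in> H" for h
  proof
    assume "t = inv x \<otimes> h \<otimes> x"
    then show "x \<otimes> t = h \<otimes> x"
      using assms that by (simp add: subsetD flip: m_assoc)
  next
    assume "x \<otimes> t = h \<otimes> x"
    then have "inv x \<otimes> (x \<otimes> t) = inv x \<otimes> (h \<otimes> x)" by simp
    then show "t = inv x \<otimes> h \<otimes> x"
      using assms that by (simp add: subsetD m_assoc flip: m_assoc)
  qed
  then show ?thesis by (auto simp: conjg_def)
qed

lemma generate_pow_closed:
  "h \<in> generate G S \<Longrightarrow> h [^]\<^bsub>G\<^esub> (n::nat) \<in> generate G S"
  by (induction n) (auto intro: generate.one generate.eng)

(* The element g_1^(e 0) \<cdots> g_d^(e (d - 1)) of T; exponents matter only modulo p - 1. *)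
definition diag_map :: "nat \<Rightarrow> nat \<Rightarrow> nat \<Rightarrow> (nat \<Rightarrow> nat) \<Rightarrow> (nat \<Rightarrow> nat) \<Rightarrow> (nat \<Rightarrow> nat)" where
  "diag_map p d mu e = (\<lambda>v \<in> Vsp p d. \<lambda>j. (mu ^ e j * v j) mod p)"

definition coord_map :: "nat \<Rightarrow> nat \<Rightarrow> nat \<Rightarrow> (nat \<Rightarrow> nat) \<Rightarrow> (nat \<Rightarrow> nat) \<Rightarrow> (nat \<Rightarrow> nat)" where
  "coord_map p d i s = (\<lambda>v \<in> Vsp p d. v(i := s (v i)))"

locale prime_primroot =
  fixes p mu :: nat
  assumes prime: "Factorial_Ring.prime p" and primroot: "residue_primroot p mu"
begin

lemma p_gt_1: "1 < p"
  using prime prime_gt_1_nat by blast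

lemma pow_mod_eq_iff: "mu ^ A mod p = mu ^ B mod p \<longleftrightarrow> [A = B] (mod (p - 1))"
proof -
  have "coprime p mu" "ord p mu = p - 1"
    using primroot prime by (simp_all add: residue_primroot_def totient_prime)
  then show ?thesis
    using order_divides_expdiff by (simp add: cong_def)
qed

lemma minus_exp_cong: "[(p - 2) * k + k = 0] (mod (p - 1))"
proof -
  have "(p - 2) * k + k = (p - 1) * k"
    using p_gt_1 by (simp add: algebra_simps)
  then show ?thesis by (simp add: cong_def)
qed

lemma Vsp_less: "v \<in> Vsp p d \<Longrightarrow> v j < p"
  using p_gt_1 by (cases "j < d") (auto simp: Vsp_def)

lemma diag_map_in_Vsp: "v \<in> Vsp p d \<Longrightarrow> diag_map p d mu e v \<in> Vsp p d"
  using p_gt_1 by (auto simp: diag_map_def Vsp_def)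

lemma diag_map_apply: "v \<in> Vsp p d \<Longrightarrow> diag_map p d mu e v j = (mu ^ e j * v j) mod p"
  by (simp add: diag_map_def)

lemma diag_map_diag_map:
  "v \<in> Vsp p d \<Longrightarrow> diag_map p d mu e (diag_map p d mu f v) = diag_map p d mu (\<lambda>j. e j + f j) v"
  using diag_map_in_Vsp[of v d f]
  by (auto simp: diag_map_def power_add mod_mult_right_eq mult.assoc)

lemma diag_map_cong:
  assumes "\<And>j. j < d \<Longrightarrow> [e j = f j] (mod (p - 1))"
  shows "diag_map p d mu e = diag_map p d mu f"
proof (rule ext)
  fix v
  have "(mu ^ e j * v j) mod p = (mu ^ f j * v j) mod p" if "v \<in> Vsp p d" for j
  proof (cases "j < d")
    case True
    then have "mu ^ e j mod p = mu ^ f j mod p"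
      using assms pow_mod_eq_iff by blast
    then show ?thesis by (metis mod_mult_left_eq)
  next
    case False
    then show ?thesis using that by (simp add: Vsp_def)
  qed
  then show "diag_map p d mu e v = diag_map p d mu f v"
    by (auto simp: diag_map_def)
qed

lemma diag_map_zero: "diag_map p d mu (\<lambda>_. 0) = \<one>\<^bsub>BijGroup (Vsp p d)\<^esub>"
  by (auto simp: diag_map_def BijGroup_def Vsp_less)

lemma diag_map_cancel:
  assumes "\<And>j. [e j + f j = 0] (mod (p - 1))" and "v \<in> Vsp p d"
  shows "diag_map p d mu e (diag_map p d mu f v) = v"
proof -
  have "diag_map p d mu (\<lambda>j. e j + f j) = diag_map p d mu (\<lambda>_. 0)"
    using assms(1) by (rule diag_map_cong)
  then show ?thesis
    using assms(2) by (simp add: diag_map_diag_map diag_map_zero BijGroup_def)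
qed

lemma diag_map_carrier: "diag_map p d mu e \<in> carrier (BijGroup (Vsp p d))"
proof -
  let ?f = "\<lambda>j. (p - 2) * e j"
  have "bij_betw (diag_map p d mu e) (Vsp p d) (Vsp p d)"
  proof (rule bij_betw_byWitness[where f' = "diag_map p d mu ?f"])
    show "\<forall>v \<in> Vsp p d. diag_map p d mu ?f (diag_map p d mu e v) = v"
      by (auto intro: diag_map_cancel minus_exp_cong)
    have "[k + (p - 2) * k = 0] (mod (p - 1))" for k
      using minus_exp_cong by (simp only: add.commute)
    then show "\<forall>v \<in> Vsp p d. diag_map p d mu e (diag_map p d mu ?f v) = v"
      by (auto intro: diag_map_cancel)
  qed (auto simp: diag_map_in_Vsp)
  then show ?thesis by (simp add: BijGroup_def Bij_def diag_map_def)
qed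

lemma diag_map_mult:
  "diag_map p d mu e \<otimes>\<^bsub>BijGroup (Vsp p d)\<^esub> diag_map p d mu f = diag_map p d mu (\<lambda>j. e j + f j)"
  by (auto simp: BijGroup_mult_eq diag_map_carrier diag_map_diag_map intro!: ext)
    (simp add: diag_map_def)

lemma diag_map_inv:
  "inv\<^bsub>BijGroup (Vsp p d)\<^esub> (diag_map p d mu e) = diag_map p d mu (\<lambda>j. (p - 2) * e j)"
proof (rule group.inv_equality[OF group_BijGroup])
  show "diag_map p d mu (\<lambda>j. (p - 2) * e j) \<otimes>\<^bsub>BijGroup (Vsp p d)\<^esub> diag_map p d mu e
      = \<one>\<^bsub>BijGroup (Vsp p d)\<^esub>"
    unfolding diag_map_mult diag_map_zero[symmetric] by (rule diag_map_cong) (rule minus_exp_cong)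
qed (rule diag_map_carrier)+

lemma diag_map_pow:
  "diag_map p d mu e [^]\<^bsub>BijGroup (Vsp p d)\<^esub> (n::nat) = diag_map p d mu (\<lambda>j. n * e j)"
  by (induction n) (simp_all add: diag_map_zero diag_map_mult algebra_simps)


lemma generate_diag_maps:
  "generate (BijGroup (Vsp p d)) ((\<lambda>j. diag_map p d mu (\<lambda> l. if l = j then w j else 0)) ` {..<d})
   = {diag_map p d mu e | e. \<forall>j<d. w j dvd e j}"
  (is "generate ?G ?S = ?R")
proof
  show "generate ?G ?S \<subseteq> ?R"
  proof
    fix h assume "h \<in> generate ?G ?S"
    then show "h \<in> ?R"
    proof (induction rule: generate.induct)
      case one
      show ?case
        by (rule CollectI, rule exI[of _ "\<lambda>_. 0"]) (simp add: diag_map_zero)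
    next
      case (incl h)
      then show ?case by force
    next
      case (inv h)
      then obtain j where "h = diag_map p d mu (\<lambda> l. if l = j then w j else 0)" by blast
      then show ?case
        by (intro CollectI exI[of _ "\<lambda>l. (p - 2) * (\<lambda> l. if l = j then w j else 0) l"]) (simp add: diag_map_inv)
    next
      case (eng h1 h2)
      then obtain e1 e2 where "h1 = diag_map p d mu e1" "h2 = diag_map p d mu e2"
        "\<forall>j<d. w j dvd e1 j" "\<forall>j<d. w j dvd e2 j" by blast
      then show ?case
        by (intro CollectI exI[of _ "\<lambda>j. e1 j + e2 j"]) (simp add: diag_map_mult)
    qed
  qed
next
  show "?R \<subseteq> generate ?G ?S"
  proof
    fix h assume "h \<in> ?R"
    then obtain e where h: "h = diag_map p d mu e" and dvd: "\<forall>j<d. w j dvd e j" by blast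
    have "diag_map p d mu (\<lambda>l. if l \<in> J then e l else 0) \<in> generate ?G ?S"
      if "finite J" "J \<subseteq> {..<d}" for J
      using that
    proof (induction J rule: finite_induct)
      case empty
      show ?case using generate.one[of ?G ?S] by (simp only: empty_iff if_False diag_map_zero)
    next
    case (insert j J)
      have "diag_map p d mu (\<lambda> l. if l = j then w j else 0) \<in> generate ?G ?S"
        using insert.prems by (intro generate.incl) simp
      then have "diag_map p d mu (\<lambda> l. if l = j then w j else 0) [^]\<^bsub>?G\<^esub> (e j div w j) \<in> generate ?G ?S"
        by (rule generate_pow_closed)
      moreover have "diag_map p d mu (\<lambda> l. if l = j then w j else 0) [^]\<^bsub>?G\<^esub> (e j div w j)
          = diag_map p d mu (\<lambda>l. if l = j then e j else 0)"
        using dvd insert.prems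
        by (auto simp: diag_map_pow intro!: arg_cong[where f = "diag_map p d mu"])
      ultimately have gen_j: "diag_map p d mu (\<lambda>l. if l = j then e j else 0) \<in> generate ?G ?S"
        by simp
      have gen_J: "diag_map p d mu (\<lambda>l. if l \<in> J then e l else 0) \<in> generate ?G ?S"
        using insert.IH insert.prems by blast
      have "diag_map p d mu (\<lambda>l. if l \<in> insert j J then e l else 0)
          = diag_map p d mu (\<lambda>l. if l \<in> J then e l else 0) \<otimes>\<^bsub>?G\<^esub> diag_map p d mu (\<lambda>l. if l = j then e j else 0)"
        using insert.hyps by (auto simp: diag_map_mult intro!: arg_cong[where f = "diag_map p d mu"])
      then show ?case
        using generate.eng[OF gen_J gen_j] by (simp only:)
    qed
    from this[of "{..<d}"] show "h \<in> generate ?G ?S"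
      unfolding h by (subst diag_map_cong[of d e]) auto
  qed
qed


definition intertwines :: "(nat \<Rightarrow> nat) \<Rightarrow> nat \<Rightarrow> nat \<Rightarrow> bool" where
  "intertwines s E F \<longleftrightarrow> (\<forall>y<p. s ((mu ^ E * y) mod p) = (mu ^ F * s y) mod p)"

lemma coord_map_in_Vsp:
  assumes "i < d" "s ` {..<p} \<subseteq> {..<p}" "v \<in> Vsp p d"
  shows "coord_map p d i s v \<in> Vsp p d"
  using assms Vsp_less[OF assms(3), of i] by (auto simp: coord_map_def Vsp_def)

lemma coord_map_apply_same: "v \<in> Vsp p d \<Longrightarrow> coord_map p d i s v i = s (v i)"
  by (simp add: coord_map_def)

lemma coord_map_carrier:
  assumes "i < d" "s ` {..<p} \<subseteq> {..<p}" "inj_on s {..<p}"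
  shows "coord_map p d i s \<in> carrier (BijGroup (Vsp p d))"
proof (rule carrier_BijGroup_of_inj_on[OF finite_Vsp])
  show "coord_map p d i s ` Vsp p d \<subseteq> Vsp p d"
    using coord_map_in_Vsp[OF assms(1,2)] by blast
  show "inj_on (coord_map p d i s) (Vsp p d)"
  proof
    fix v w assume v: "v \<in> Vsp p d" and w: "w \<in> Vsp p d"
      and "coord_map p d i s v = coord_map p d i s w"
    then have eq: "v(i := s (v i)) = w(i := s (w i))" by (simp add: coord_map_def)
    then have "s (v i) = s (w i)" by (metis fun_upd_same)
    then have "v i = w i"
      using assms(3) Vsp_less[OF v] Vsp_less[OF w] by (auto dest: inj_onD)
    then show "v = w" using eq by (metis fun_upd_triv fun_upd_upd)
  qed
qed (simp add: coord_map_def)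

lemma coord_map_commute_diag_map:
  assumes "i < d" "s ` {..<p} \<subseteq> {..<p}" "inj_on s {..<p}" "intertwines s (e i) (e i)"
  shows "coord_map p d i s \<otimes>\<^bsub>BijGroup (Vsp p d)\<^esub> diag_map p d mu e
    = diag_map p d mu e \<otimes>\<^bsub>BijGroup (Vsp p d)\<^esub> coord_map p d i s"
proof -
  have "coord_map p d i s (diag_map p d mu e v) = diag_map p d mu e (coord_map p d i s v)"
    if v: "v \<in> Vsp p d" for v
    using v diag_map_in_Vsp[OF v] coord_map_in_Vsp[OF assms(1,2) v] assms(4) Vsp_less[OF v, of i]
    by (auto simp: coord_map_def diag_map_def intertwines_def)
  then show ?thesis
    using coord_map_carrier[OF assms(1-3)] diag_map_carrier
    by (auto simp: BijGroup_mult_eq intro: restrict_ext)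
qed

lemma intertwines_of_coord_map_mult_eq:
  assumes "i < d" "s ` {..<p} \<subseteq> {..<p}" "inj_on s {..<p}"
    and eq: "coord_map p d i s \<otimes>\<^bsub>BijGroup (Vsp p d)\<^esub> diag_map p d mu e
      = diag_map p d mu f \<otimes>\<^bsub>BijGroup (Vsp p d)\<^esub> coord_map p d i s"
  shows "intertwines s (e i) (f i)"
  unfolding intertwines_def
proof (intro allI impI)
  fix y assume "y < p"
  define u where "u = (\<lambda>j. if j = i then y else 0)"
  have u: "u \<in> Vsp p d" using assms(1) \<open>y < p\<close> by (auto simp: u_def Vsp_def)
  have "coord_map p d i s (diag_map p d mu e u) = diag_map p d mu f (coord_map p d i s u)"
    using fun_cong[OF eq, of u] u coord_map_carrier[OF assms(1-3)] diag_map_carrier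
    by (simp add: BijGroup_mult_eq)
  then have "coord_map p d i s (diag_map p d mu e u) i = diag_map p d mu f (coord_map p d i s u) i"
    by simp
  then show "s ((mu ^ e i * y) mod p) = (mu ^ f i * s y) mod p"
    using u diag_map_in_Vsp[OF u] coord_map_in_Vsp[OF assms(1,2) u]
    by (simp add: diag_map_apply coord_map_apply_same u_def)
qed

(* The case d = 1 of the theorem: conjugation by s keeps multiplication by mu^E scalar iff a divides E. *)
definition separates_exponent :: "nat \<Rightarrow> (nat \<Rightarrow> nat) \<Rightarrow> bool" where
  "separates_exponent a s \<longleftrightarrow> s ` {..<p} \<subseteq> {..<p} \<and> inj_on s {..<p}
     \<and> (\<forall>E. a dvd E \<longrightarrow> intertwines s E E) \<and> (\<forall>E F. intertwines s E F \<longrightarrow> a dvd E)"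

lemma diag_maps_inter_conjg_coord_map:
  assumes "i < d" "separates_exponent a s"
  shows "range (diag_map p d mu) \<inter> conjg (BijGroup (Vsp p d)) (range (diag_map p d mu)) (coord_map p d i s)
    = {diag_map p d mu e | e. a dvd e i}"
proof -
  let ?G = "BijGroup (Vsp p d)" and ?x = "coord_map p d i s"
  have s: "s ` {..<p} \<subseteq> {..<p}" "inj_on s {..<p}"
    using assms(2) by (simp_all add: separates_exponent_def)
  have conj_iff: "diag_map p d mu e \<in> conjg ?G (range (diag_map p d mu)) ?x
      \<longleftrightarrow> (\<exists>f. ?x \<otimes>\<^bsub>?G\<^esub> diag_map p d mu e = diag_map p d mu f \<otimes>\<^bsub>?G\<^esub> ?x)" for e
    using diag_map_carrier
    by (subst group.conjg_mem_iff[OF group_BijGroup coord_map_carrier[OF assms(1) s] diag_map_carrier])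
      auto
  have "diag_map p d mu e \<in> conjg ?G (range (diag_map p d mu)) ?x \<longleftrightarrow> a dvd e i" for e
  proof
    assume "diag_map p d mu e \<in> conjg ?G (range (diag_map p d mu)) ?x"
    then obtain f where "?x \<otimes>\<^bsub>?G\<^esub> diag_map p d mu e = diag_map p d mu f \<otimes>\<^bsub>?G\<^esub> ?x"
      using conj_iff by blast
    then have "intertwines s (e i) (f i)"
      by (rule intertwines_of_coord_map_mult_eq[OF assms(1) s])
    then show "a dvd e i"
      using assms(2) unfolding separates_exponent_def by blast
  next
    assume "a dvd e i"
    then have "intertwines s (e i) (e i)"
      using assms(2) by (simp add: separates_exponent_def)
    then show "diag_map p d mu e \<in> conjg ?G (range (diag_map p d mu)) ?x"
      using conj_iff coord_map_commute_diag_map[OF assms(1) s] by blast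
  qed
  then show ?thesis by auto
qed

lemma coprime_mu: "coprime mu p"
  using primroot by (simp add: residue_primroot_def coprime_commute)

lemma pow_mod_eq_1_iff: "mu ^ E mod p = 1 \<longleftrightarrow> (p - 1) dvd E"
  using pow_mod_eq_iff[of E 0] p_gt_1 by (simp add: cong_0_iff)

lemma mult_pow_mod_cancel:
  assumes "(mu ^ E * y) mod p = (mu ^ E * z) mod p" "y < p" "z < p"
  shows "y = z"
proof -
  have "coprime (mu ^ E) p"
    using coprime_mu by simp
  then have "[y = z] (mod p)"
    using assms(1) cong_mult_lcancel_nat by (auto simp: cong_def)
  then show ?thesis
    using assms(2,3) by (simp add: cong_def)
qed

lemma separates_exponent_transposition: "separates_exponent (p - 1) (id(0 := 1, 1 := 0))"
  (is "separates_exponent _ ?s")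
  unfolding separates_exponent_def
proof (intro conjI allI impI)
  show "?s ` {..<p} \<subseteq> {..<p}" "inj_on ?s {..<p}"
    using p_gt_1 by (auto simp: inj_on_def)
  show "intertwines ?s E E" if "(p - 1) dvd E" for E
  proof -
    have "(mu ^ E * y) mod p = y" if "y < p" for y
      using \<open>(p - 1) dvd E\<close> that pow_mod_eq_1_iff by (metis mod_mult_left_eq mult_1 mod_less)
    moreover have "?s y < p" if "y < p" for y
      using that p_gt_1 by auto
    ultimately show ?thesis
      by (simp add: intertwines_def)
  qed
  show "(p - 1) dvd E" if "intertwines ?s E F" for E F
  proof -
    have "?s ((mu ^ E * 1) mod p) = (mu ^ F * ?s 1) mod p"
      using that p_gt_1 unfolding intertwines_def by blast
    then have "?s (mu ^ E mod p) = 0"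
      by simp
    then have "mu ^ E mod p = 1"
      by (simp split: if_splits)
    then show ?thesis
      using pow_mod_eq_1_iff by blast
  qed
qed

end

(* The permutation twist below, read on exponents of mu. *)
definition bump :: "nat \<Rightarrow> nat \<Rightarrow> nat" where
  "bump a u = (if a dvd u then u + a else u)"

lemma dvd_of_bump_cong:
  fixes n a E F :: nat
  assumes "a dvd n" "0 < a" "a < n" "(n, a) \<noteq> (4, 2)"
    and bump_cong: "\<And>u. [bump a (E + u) = F + bump a u] (mod n)"
  shows "a dvd E"
proof (rule ccontr)
  \<comment> \<open>u = 0 and u = (n - 1) E give 2 a = 0 mod n, so n = 2 a; then u \<in> {1, 2} gives a = 0 unless a \<le> 2.\<close>
  assume E: "\<not> a dvd E"
  have F_a: "[E = F + a] (mod n)"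
    using bump_cong[of 0] E by (simp add: bump_def)
  define u where "u = (n - 1) * E"
  have "E + u = n * E"
    using assms(3) by (cases n) (simp_all add: u_def)
  then have "a dvd E + u"
    using assms(1) by simp
  moreover have "\<not> a dvd u"
    using \<open>a dvd E + u\<close> E by (metis dvd_add_left_iff)
  ultimately have "[E + a + u = F + u] (mod n)"
    using bump_cong[of u] by (simp add: bump_def add_ac)
  then have "[E + a = F] (mod n)"
    by (simp add: cong_add_rcancel_nat)
  then have "[E + a + a = F + a] (mod n)"
    by (simp add: cong_add_rcancel_nat)
  also have "[F + a = E] (mod n)"
    using F_a by (rule cong_sym)
  finally have "[E + (a + a) = E + 0] (mod n)"
    by (simp add: add.assoc)
  then have "n dvd a + a"
    by (simp add: cong_add_lcancel_0_nat cong_0_iff)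
  then obtain k where k: "a + a = n * k"
    by (elim dvdE)
  have "k = 1"
  proof -
    have "k \<noteq> 0" using k assms(2) by (cases k) auto
    moreover have "k < 2"
    proof (rule ccontr)
      assume "\<not> k < 2"
      then have "n * 2 \<le> n * k" by simp
      then show False using k assms(3) by linarith
    qed
    ultimately show ?thesis by simp
  qed
  then have n: "n = a + a" using k by simp
  have "a \<noteq> 1" "a \<noteq> 2"
    using E assms(4) n by auto
  then have a3: "3 \<le> a"
    using assms(2) by linarith
  define v where "v = (if a dvd E + 1 then 2 else (1::nat))"
  have "\<not> a dvd v"
    using a3 by (auto simp: v_def dest: dvd_imp_le)
  moreover have "\<not> a dvd E + v"
  proof
    assume "a dvd E + v"
    then have "a dvd E + 2" "a dvd E + 1"
      by (auto simp: v_def split: if_splits)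
    then have "a dvd (E + 2) - (E + 1)"
      by (rule dvd_diff_nat)
    then show False using a3 by simp
  qed
  ultimately have "[E + v = F + v] (mod n)"
    using bump_cong[of v] by (simp add: bump_def)
  have "[F + a = E] (mod n)"
    using F_a by (rule cong_sym)
  also have "[E = F + 0] (mod n)"
    using \<open>[E + v = F + v] (mod n)\<close> by (simp add: cong_add_rcancel_nat)
  finally have "n dvd a"
    by (simp add: cong_add_lcancel_0_nat cong_0_iff)
  then show False
    using assms(2,3) by (auto dest: dvd_imp_le)
qed

context prime_primroot
begin

definition pow_subgroup :: "nat \<Rightarrow> nat set" where
  "pow_subgroup a = {mu ^ t mod p | t. a dvd t}"

definition twist :: "nat \<Rightarrow> nat \<Rightarrow> nat" where
  "twist a y = (if y \<in> pow_subgroup a then (mu ^ a * y) mod p else y)"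

lemma pow_mem_pow_subgroup_iff:
  assumes "a dvd p - 1"
  shows "mu ^ u mod p \<in> pow_subgroup a \<longleftrightarrow> a dvd u"
proof
  assume "mu ^ u mod p \<in> pow_subgroup a"
  then obtain t where "a dvd t" "mu ^ u mod p = mu ^ t mod p"
    by (auto simp: pow_subgroup_def)
  then show "a dvd u"
    using assms pow_mod_eq_iff cong_dvd_modulus_nat cong_dvd_iff by blast
qed (auto simp: pow_subgroup_def)

lemma twist_pow:
  assumes "a dvd p - 1"
  shows "twist a (mu ^ u mod p) = mu ^ bump a u mod p"
  using pow_mem_pow_subgroup_iff[OF assms]
  by (simp add: twist_def bump_def mod_mult_right_eq power_add mult.commute)

lemma mult_mem_pow_subgroup_iff:
  assumes "a dvd E" "y < p"
  shows "(mu ^ E * y) mod p \<in> pow_subgroup a \<longleftrightarrow> y \<in> pow_subgroup a"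
proof
  assume "(mu ^ E * y) mod p \<in> pow_subgroup a"
  then obtain t where t: "a dvd t" "(mu ^ E * y) mod p = mu ^ t mod p"
    by (auto simp: pow_subgroup_def)
  have "mu ^ ((p - 2) * E + E) mod p = 1"
    using pow_mod_eq_iff[of _ 0] minus_exp_cong p_gt_1 by simp
  then have "y = (mu ^ ((p - 2) * E + E) * y) mod p"
    using assms(2) by (metis mod_mult_left_eq mult_1 mod_less)
  also have "\<dots> = (mu ^ ((p - 2) * E) * ((mu ^ E * y) mod p)) mod p"
    by (simp add: power_add mult.assoc mod_mult_right_eq)
  also have "\<dots> = mu ^ ((p - 2) * E + t) mod p"
    using t(2) by (simp add: power_add mod_mult_right_eq)
  finally show "y \<in> pow_subgroup a"
    using assms(1) t(1) by (auto simp: pow_subgroup_def)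
next
  assume "y \<in> pow_subgroup a"
  then obtain t where "a dvd t" "y = mu ^ t mod p"
    by (auto simp: pow_subgroup_def)
  then have "(mu ^ E * y) mod p = mu ^ (E + t) mod p" "a dvd E + t"
    using assms(1) by (simp_all add: power_add mod_mult_right_eq)
  then show "(mu ^ E * y) mod p \<in> pow_subgroup a"
    by (auto simp: pow_subgroup_def)
qed

lemma twist_mem_pow_subgroup_iff:
  "y < p \<Longrightarrow> twist a y \<in> pow_subgroup a \<longleftrightarrow> y \<in> pow_subgroup a"
  using mult_mem_pow_subgroup_iff[of a a y] by (auto simp: twist_def)

lemma separates_exponent_twist:
  assumes "a dvd p - 1" "0 < a" "a < p - 1" "(p, a) \<noteq> (5, 2)"
  shows "separates_exponent a (twist a)"
  unfolding separates_exponent_def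
proof (intro conjI allI impI)
  show "twist a ` {..<p} \<subseteq> {..<p}"
    using p_gt_1 by (auto simp: twist_def)
  show "inj_on (twist a) {..<p}"
  proof
    fix y z assume y: "y \<in> {..<p}" and z: "z \<in> {..<p}" and eq: "twist a y = twist a z"
    then have "y \<in> pow_subgroup a \<longleftrightarrow> z \<in> pow_subgroup a"
      using twist_mem_pow_subgroup_iff[of y a] twist_mem_pow_subgroup_iff[of z a] by simp
    then show "y = z"
      using eq y z mult_pow_mod_cancel[of a y z] by (simp add: twist_def split: if_splits)
  qed
  show "intertwines (twist a) E E" if "a dvd E" for E
    unfolding intertwines_def
  proof (intro allI impI)
    fix y assume "y < p"
    then have "(mu ^ E * y) mod p \<in> pow_subgroup a \<longleftrightarrow> y \<in> pow_subgroup a"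
      by (rule mult_mem_pow_subgroup_iff[OF that])
    then show "twist a ((mu ^ E * y) mod p) = (mu ^ E * twist a y) mod p"
      by (auto simp: twist_def mod_mult_right_eq mult.left_commute)
  qed
  show "a dvd E" if "intertwines (twist a) E F" for E F
  proof (rule dvd_of_bump_cong[OF assms(1-3)])
    show "(p - 1, a) \<noteq> (4, 2)"
      using assms(4) by auto
    fix u
    have "twist a ((mu ^ E * (mu ^ u mod p)) mod p) = (mu ^ F * twist a (mu ^ u mod p)) mod p"
      using that p_gt_1 unfolding intertwines_def by (meson mod_less_divisor zero_less_one less_trans)
    then have "mu ^ bump a (E + u) mod p = mu ^ (F + bump a u) mod p"
      by (simp add: twist_pow[OF assms(1)] mod_mult_right_eq flip: power_add)
    then show "[bump a (E + u) = F + bump a u] (mod (p - 1))"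
      using pow_mod_eq_iff by blast
  qed
qed

lemma gdiag_eq_diag_map: "gdiag p d mu j = diag_map p d mu (\<lambda>l. if l = j then 1 else 0)"
  by (auto simp: gdiag_def diag_map_def Vsp_less intro!: restrict_ext)

lemma generate_gdiag: "generate (BijGroup (Vsp p d)) (gdiag p d mu ` {..<d}) = range (diag_map p d mu)"
  using generate_diag_maps[of d "\<lambda>_. 1"] by (simp add: gdiag_eq_diag_map full_SetCompr_eq)

lemma generate_gdiag_pow:
  assumes "i < d"
  shows "generate (BijGroup (Vsp p d))
      (gdiag p d mu ` ({..<d} - {i}) \<union> {gdiag p d mu i [^]\<^bsub>BijGroup (Vsp p d)\<^esub> a})
    = {diag_map p d mu e | e. a dvd e i}"
proof -
  let ?w = "\<lambda>j. if j = i then a else 1"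
  let ?f = "\<lambda>j. diag_map p d mu (\<lambda>l. if l = j then ?w j else 0)"
  have "?f ` {..<d} = ?f ` insert i ({..<d} - {i})"
    using assms by (simp add: insert_absorb)
  also have "\<dots> = gdiag p d mu ` ({..<d} - {i}) \<union> {gdiag p d mu i [^]\<^bsub>BijGroup (Vsp p d)\<^esub> a}"
  proof -
    have "gdiag p d mu i [^]\<^bsub>BijGroup (Vsp p d)\<^esub> a = ?f i"
      unfolding gdiag_eq_diag_map diag_map_pow by (rule arg_cong[where f = "diag_map p d mu"]) auto
    moreover have "gdiag p d mu ` ({..<d} - {i}) = ?f ` ({..<d} - {i})"
      by (auto simp: gdiag_eq_diag_map)
    ultimately show ?thesis
      by (simp only: image_insert Un_insert_right Un_empty_right)
  qed
  finally have gens: "gdiag p d mu ` ({..<d} - {i}) \<union> {gdiag p d mu i [^]\<^bsub>BijGroup (Vsp p d)\<^esub> a}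
      = ?f ` {..<d}" ..
  have "(\<forall>j<d. ?w j dvd e j) \<longleftrightarrow> a dvd e i" for e
    using assms by auto
  then show ?thesis
    unfolding gens generate_diag_maps by simp
qed

lemma exists_separates_exponent:
  assumes "a dvd p - 1" "0 < a" "(p, a) \<noteq> (5, 2)"
  shows "\<exists>s. separates_exponent a s"
proof (cases "a = p - 1")
  case True
  then show ?thesis using separates_exponent_transposition by blast
next
  case False
  then have "a < p - 1"
    using assms(1,2) p_gt_1 by (simp add: dvd_imp_le le_neq_implies_less)
  then show ?thesis using separates_exponent_twist assms by blast
qed

end

theorem lemma3p6:
  fixes p d mu i a :: nat
  assumes "Factorial_Ring.prime p" and "p \<ge> 3" and "d \<ge> 1" and "p ^ d \<ge> 7"
    and "mu < p" and "residue_primroot p mu"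
    and "i < d"
    and "a > 0" and "a dvd (p - 1)" and "(p, a) \<noteq> (5, 2)"
  shows "\<exists>x \<in> carrier (SymV p d).
    generate (SymV p d) (gdiag p d mu ` {..<d}) \<inter>
      conjg (SymV p d) (generate (SymV p d) (gdiag p d mu ` {..<d})) x
    = generate (SymV p d)
        (gdiag p d mu ` ({..<d} - {i}) \<union> {gdiag p d mu i [^]\<^bsub>SymV p d\<^esub> a})"
proof -
  interpret prime_primroot p mu
    using assms(1,6) by unfold_locales
  obtain s where s: "separates_exponent a s"
    using exists_separates_exponent assms(8-10) by blast
  show ?thesis
  proof
    show "coord_map p d i s \<in> carrier (SymV p d)"
      using coord_map_carrier assms(7) s by (simp add: SymV_def separates_exponent_def)
    show "generate (SymV p d) (gdiag p d mu ` {..<d}) \<inter>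
        conjg (SymV p d) (generate (SymV p d) (gdiag p d mu ` {..<d})) (coord_map p d i s)
      = generate (SymV p d)
          (gdiag p d mu ` ({..<d} - {i}) \<union> {gdiag p d mu i [^]\<^bsub>SymV p d\<^esub> a})"
      unfolding SymV_def generate_gdiag generate_gdiag_pow[OF assms(7)]
      by (rule diag_maps_inter_conjg_coord_map[OF assms(7) s])
  qed
qed

end
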